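(* Let $N$ be the number of experts, $T$ the time horizon, and run EXP4.AT with learning rate $\eta=\sqrt{\frac{\ln N}{2T}}$. Then for any sequence of true labels $y_1,\dots,y_T\in\{0,1\}$ and expert advice $(\mathcal{E}^i_t)$, the predictions $\hat y_1,\dots,\hat y_T$ output by EXP4.AT satisfy $$\mathbb{E}\Bigl[\sum_{t=1}^T\mathbb{1}\{\hat y_t\ne y_t\}\Bigr] \le \inf_{j\in[N]}\sum_{t=1}^T\mathbb{1}\{\mathcal{E}^j_t\ne y_t\} + 3\sqrt{T\ln N}.$$
   Context: Binary prediction with expert advice under apple tasting feedback, where the labels and advice are fixed in advance (not depending on the algorithm's randomness). EXP4.AT with learning rate $\eta\in(0,\tfrac12)$: let $q_1$ be uniform on $[N]$. In each round $t=1,\dots,T$: receive advice $\mathcal{E}^1_t,\dots,\mathcal{E}^N_t\in\{0,1\}$; set $p_t^1=(1-\eta)\sum_{i=1}^N q_t^i\mathcal{E}^i_t+\eta$ and $p_t^0=1-p_t^1$; predict $\hat y_t=1$ with probability $p_t^1$ and $\hat y_t=0$ otherwise; the true label $y_t$ is observed only if $\hat y_t=1$; define $\hat\ell_t(y)=\mathbb{1}\{y\ne y_t\}\mathbb{1}\{\hat y_t=1\}/p_t^1$ for $y\in\{0,1\}$; update $q_{t+1}^i=\frac{q_t^i\exp(-\eta\hat\ell_t(\mathcal{E}^i_t))}{\sum_{j=1}^N q_t^j\exp(-\eta\hat\ell_t(\mathcal{E}^j_t))}$. The expectation is over the algorithm's randomness. *)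

theory Defs
  imports "HOL-Probability.Probability"
begin

text \<open>Binary labels/advice {0,1} are encoded as bool (True = 1).
  Experts are indexed by {..<N}; rounds by 1..T.
  E t i is the advice of expert i in round t; y t is the true label in round t.\<close>

definition indic :: "bool \<Rightarrow> real" where
  "indic b = (if b then 1 else 0)"

definition exp4_p1 :: "real \<Rightarrow> nat \<Rightarrow> (nat \<Rightarrow> nat \<Rightarrow> bool) \<Rightarrow> nat \<Rightarrow> (nat \<Rightarrow> real) \<Rightarrow> real" where
  "exp4_p1 \<eta> N E t q = (1 - \<eta>) * (\<Sum>i<N. q i * indic (E t i)) + \<eta>"

definition exp4_lhat :: "real \<Rightarrow> nat \<Rightarrow> (nat \<Rightarrow> nat \<Rightarrow> bool) \<Rightarrow> (nat \<Rightarrow> bool) \<Rightarrow> nat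
    \<Rightarrow> (nat \<Rightarrow> real) \<Rightarrow> bool \<Rightarrow> bool \<Rightarrow> real" where
  "exp4_lhat \<eta> N E y t q yh v = indic (v \<noteq> y t) * indic yh / exp4_p1 \<eta> N E t q"

definition exp4_update :: "real \<Rightarrow> nat \<Rightarrow> (nat \<Rightarrow> nat \<Rightarrow> bool) \<Rightarrow> (nat \<Rightarrow> bool) \<Rightarrow> nat
    \<Rightarrow> (nat \<Rightarrow> real) \<Rightarrow> bool \<Rightarrow> (nat \<Rightarrow> real)" where
  "exp4_update \<eta> N E y t q yh =
     (\<lambda>i. q i * exp (- \<eta> * exp4_lhat \<eta> N E y t q yh (E t i)) /
          (\<Sum>j<N. q j * exp (- \<eta> * exp4_lhat \<eta> N E y t q yh (E t j))))"

text \<open>exp4_run \<eta> N E y k t q: distribution of the number of mistakes made in the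
  k rounds t, t+1, ..., t+k-1, when the weight vector at round t is q.\<close>
primrec exp4_run :: "real \<Rightarrow> nat \<Rightarrow> (nat \<Rightarrow> nat \<Rightarrow> bool) \<Rightarrow> (nat \<Rightarrow> bool) \<Rightarrow> nat \<Rightarrow> nat
    \<Rightarrow> (nat \<Rightarrow> real) \<Rightarrow> nat pmf" where
  "exp4_run \<eta> N E y 0 t q = return_pmf 0"
| "exp4_run \<eta> N E y (Suc k) t q =
     bind_pmf (bernoulli_pmf (exp4_p1 \<eta> N E t q)) (\<lambda>yh.
       map_pmf (\<lambda>m. (if yh \<noteq> y t then 1 else 0) + m)
         (exp4_run \<eta> N E y k (Suc t) (exp4_update \<eta> N E y t q yh)))"

definition exp4_mistakes :: "real \<Rightarrow> nat \<Rightarrow> nat \<Rightarrow> (nat \<Rightarrow> nat \<Rightarrow> bool) \<Rightarrow> (nat \<Rightarrow> bool) \<Rightarrow> nat pmf" where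
  "exp4_mistakes \<eta> N T E y = exp4_run \<eta> N E y T 1 (\<lambda>i. 1 / real N)"

end

theory Submission
  imports Defs
begin

text \<open>Fix an expert j and take -ln q_t(j) / \<eta> as potential. Predicting 0 gives no feedback and
  leaves the weights unchanged; predicting 1, which happens with probability p_t \<ge> \<eta>, reveals
  y_t and multiplies the weight of every wrong expert by exp (-\<eta>/p_t), where \<eta>/p_t \<le> 1. In each
  round the expected mistake of the learner minus that of expert j, plus the expected growth
  of the potential, is at most 2\<eta>. Since the potential starts at ln N / \<eta> and stays
  nonnegative, the expected number of mistakes exceeds that of expert j by at most
  ln N / \<eta> + 2\<eta>T, which is 2 sqrt (2 T ln N) for the tuned \<eta>.\<close>

lemma exp_minus_le_quadratic:
  fixes x :: real
  assumes "0 \<le> x"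
  shows "exp (-x) \<le> 1 - x + x\<^sup>2"
proof -
  have pos: "0 < 1 + x"
    using assms by simp
  have "exp (-x) = 1 / exp x"
    by (simp add: exp_minus inverse_eq_divide)
  also have "\<dots> \<le> 1 / (1 + x)"
    using pos by (simp add: frac_le)
  also have "\<dots> \<le> 1 - x + x\<^sup>2"
  proof -
    have "1 \<le> (1 - x + x\<^sup>2) * (1 + x)"
      using assms by (simp add: algebra_simps power2_eq_square)
    then show ?thesis
      using pos by (simp add: divide_le_eq)
  qed
  finally show ?thesis .
qed

lemma ln_weighted_exp_minus_le:
  fixes b x :: real
  assumes "0 \<le> b" "b \<le> 1" "0 \<le> x"
  shows "ln (b * exp (-x) + (1 - b)) \<le> b * (x\<^sup>2 - x)"
proof -
  define Z where "Z = b * exp (-x) + (1 - b)"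
  have "0 \<le> (1 - b) * (1 - exp (-x))"
    using assms by simp
  moreover have "Z = exp (-x) + (1 - b) * (1 - exp (-x))"
    by (simp add: Z_def algebra_simps)
  ultimately have "0 < Z"
    by (metis add_pos_nonneg exp_gt_zero)
  then have "ln Z \<le> Z - 1"
    by (rule ln_le_minus_one)
  also have "\<dots> = b * (exp (-x) - 1)"
    by (simp add: Z_def algebra_simps)
  also have "\<dots> \<le> b * (x\<^sup>2 - x)"
    using mult_left_mono[OF exp_minus_le_quadratic[OF assms(3)] assms(1)]
    by (simp add: algebra_simps)
  finally show ?thesis
    by (simp add: Z_def)
qed

text \<open>Factoring out exp (-x) puts the quadratic error on the undamped weight b; applying
  ln_weighted_exp_minus_le to the weight 1 - b instead is too weak when x is close to 1.\<close>
lemma ln_weighted_exp_minus_le':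
  fixes b x :: real
  assumes "0 \<le> b" "0 \<le> x" "x \<le> 1"
  shows "ln (b + (1 - b) * exp (-x)) \<le> b * (x + x\<^sup>2) - x"
proof -
  define W where "W = b * exp x + (1 - b)"
  have "b * 1 \<le> b * exp x"
    using assms by (intro mult_left_mono) auto
  then have W: "1 \<le> W"
    by (simp add: W_def)
  have "b + (1 - b) * exp (-x) = exp (-x) * W"
    by (simp add: W_def algebra_simps flip: exp_add)
  then have "ln (b + (1 - b) * exp (-x)) = ln W - x"
    using W by (simp add: ln_mult)
  moreover have "ln W \<le> W - 1"
    using W by (intro ln_le_minus_one) simp
  moreover have "b * exp x \<le> b * (1 + x + x\<^sup>2)"
    using exp_bound[OF assms(2,3)] assms(1) by (rule mult_left_mono)
  then have "W - 1 \<le> b * (x + x\<^sup>2)"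
    by (simp add: W_def algebra_simps)
  ultimately show ?thesis
    by linarith
qed

lemma exploration_round_bound:
  fixes \<eta> a p :: real
  assumes "0 < \<eta>" "\<eta> \<le> 1" "0 \<le> a" "a \<le> 1" and p: "p = (1 - \<eta>) * a + \<eta>"
  shows "1 - p + p * ln (a + (1 - a) * exp (-\<eta>/p)) / \<eta> \<le> 2 * \<eta>"
    and "p + p * ln (a * exp (-\<eta>/p) + (1 - a)) / \<eta> \<le> 2 * \<eta>"
proof -
  have nonneg: "0 \<le> \<eta> * (1 - a)" "0 \<le> (1 - \<eta>) * a" "\<eta> * (1 - a) \<le> \<eta>"
    using assms by simp_all
  have diff: "p - a = \<eta> * (1 - a)" "p - \<eta> = (1 - \<eta>) * a"
    by (simp_all add: p algebra_simps)
  have pa: "a \<le> p" "p - a \<le> \<eta>"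
    using nonneg(1,3) diff(1) by linarith+
  have "\<eta> \<le> p"
    using nonneg(2) diff(2) by linarith
  then have "0 < p"
    using assms(1) by linarith
  define x where "x = \<eta> / p"
  have x: "0 \<le> x" "x \<le> 1"
    using \<open>0 < p\<close> \<open>\<eta> \<le> p\<close> assms(1) by (simp_all add: x_def)
  have "a * x \<le> \<eta>"
    using \<open>0 < p\<close> pa(1) assms(1) by (simp add: x_def field_simps mult_right_mono)
  have scale: "p * (b * x\<^sup>2 - c * x) / \<eta> = b * x - c" for b c
    using \<open>0 < p\<close> assms(1) by (simp add: x_def field_simps power2_eq_square)
  have "p * ln (a + (1 - a) * exp (-x)) / \<eta> \<le> p * (a * x\<^sup>2 - (1 - a) * x) / \<eta>"
    using ln_weighted_exp_minus_le'[OF assms(3) x] \<open>0 < p\<close> assms(1)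
    by (intro divide_right_mono mult_left_mono) (auto simp: algebra_simps)
  also have "\<dots> = a * x - (1 - a)"
    by (rule scale)
  finally show "1 - p + p * ln (a + (1 - a) * exp (-\<eta>/p)) / \<eta> \<le> 2 * \<eta>"
    using pa \<open>a * x \<le> \<eta>\<close> assms(1) by (simp add: x_def)
  have "p * ln (a * exp (-x) + (1 - a)) / \<eta> \<le> p * (a * x\<^sup>2 - a * x) / \<eta>"
    using ln_weighted_exp_minus_le[OF assms(3,4) x(1)] \<open>0 < p\<close> assms(1)
    by (intro divide_right_mono mult_left_mono) (auto simp: algebra_simps)
  also have "\<dots> = a * x - a"
    by (rule scale)
  finally show "p + p * ln (a * exp (-\<eta>/p) + (1 - a)) / \<eta> \<le> 2 * \<eta>"
    using pa \<open>a * x \<le> \<eta>\<close> by (simp add: x_def)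
qed

lemma indic_simps [simp]: "indic True = 1" "indic False = 0"
  by (simp_all add: indic_def)

definition prob_vector :: "nat \<Rightarrow> (nat \<Rightarrow> real) \<Rightarrow> bool" where
  "prob_vector N q \<longleftrightarrow> (\<forall>i<N. 0 < q i) \<and> (\<Sum>i<N. q i) = 1"

lemma prob_vector_nonempty:
  assumes "prob_vector N q"
  shows "0 < N"
  using assms by (cases N) (auto simp: prob_vector_def)

lemma prob_vector_le_one:
  assumes "prob_vector N q" "i < N"
  shows "q i \<le> 1"
proof -
  have "q i \<le> (\<Sum>j<N. q j)"
    using assms by (intro member_le_sum) (auto simp: prob_vector_def less_imp_le)
  then show ?thesis
    using assms(1) by (simp add: prob_vector_def)
qed

definition vote_share :: "nat \<Rightarrow> (nat \<Rightarrow> nat \<Rightarrow> bool) \<Rightarrow> nat \<Rightarrow> (nat \<Rightarrow> real) \<Rightarrow> real" where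
  "vote_share N E t q = (\<Sum>i<N. q i * indic (E t i))"

lemma vote_share_bounds:
  assumes "prob_vector N q"
  shows "0 \<le> vote_share N E t q" "vote_share N E t q \<le> 1"
proof -
  have q: "0 \<le> q i" if "i < N" for i
    using assms that by (simp add: prob_vector_def less_imp_le)
  show "0 \<le> vote_share N E t q"
    unfolding vote_share_def using q by (intro sum_nonneg) (simp add: indic_def)
  have "vote_share N E t q \<le> (\<Sum>i<N. q i)"
    unfolding vote_share_def using q by (intro sum_mono) (simp add: indic_def)
  then show "vote_share N E t q \<le> 1"
    using assms by (simp add: prob_vector_def)
qed

lemma exp4_p1_eq_vote_share: "exp4_p1 \<eta> N E t q = (1 - \<eta>) * vote_share N E t q + \<eta>"
  by (simp add: exp4_p1_def vote_share_def)

lemma exp4_p1_bounds: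
  assumes "prob_vector N q" "\<eta> \<le> 1"
  shows "\<eta> \<le> exp4_p1 \<eta> N E t q" "exp4_p1 \<eta> N E t q \<le> 1"
proof -
  have v: "0 \<le> vote_share N E t q" "vote_share N E t q \<le> 1"
    using vote_share_bounds[OF assms(1)] by auto
  have "0 \<le> (1 - \<eta>) * vote_share N E t q"
    using v(1) assms(2) by simp
  moreover have "(1 - \<eta>) * vote_share N E t q \<le> 1 - \<eta>"
    using mult_left_le[OF v(2), of "1 - \<eta>"] assms(2) by simp
  ultimately show "\<eta> \<le> exp4_p1 \<eta> N E t q" "exp4_p1 \<eta> N E t q \<le> 1"
    by (simp_all add: exp4_p1_eq_vote_share)
qed

definition exp4_norm :: "real \<Rightarrow> nat \<Rightarrow> (nat \<Rightarrow> nat \<Rightarrow> bool) \<Rightarrow> (nat \<Rightarrow> bool) \<Rightarrow> nat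
    \<Rightarrow> (nat \<Rightarrow> real) \<Rightarrow> real" where
  "exp4_norm \<eta> N E y t q = (\<Sum>j<N. q j * exp (- \<eta> * exp4_lhat \<eta> N E y t q True (E t j)))"

lemma exp4_update_False:
  assumes "prob_vector N q"
  shows "exp4_update \<eta> N E y t q False = q"
  using assms by (simp add: exp4_update_def exp4_lhat_def prob_vector_def)

lemma exp4_update_True:
  "exp4_update \<eta> N E y t q True =
     (\<lambda>i. q i * exp (- \<eta> * indic (E t i \<noteq> y t) / exp4_p1 \<eta> N E t q) / exp4_norm \<eta> N E y t q)"
  by (simp add: exp4_update_def exp4_norm_def exp4_lhat_def)

lemma exp4_norm_pos:
  assumes "prob_vector N q"
  shows "0 < exp4_norm \<eta> N E y t q"
  using assms prob_vector_nonempty[OF assms] unfolding exp4_norm_def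
  by (intro sum_pos) (auto simp: prob_vector_def)

lemma exp4_norm_eq:
  fixes \<eta> :: real and E :: "nat \<Rightarrow> nat \<Rightarrow> bool" and t :: nat
  assumes "prob_vector N q"
  defines "a \<equiv> vote_share N E t q" and "d \<equiv> exp (- \<eta> / exp4_p1 \<eta> N E t q)"
  shows "exp4_norm \<eta> N E y t q = (if y t then a + (1 - a) * d else a * d + (1 - a))"
proof -
  define w where "w v = (if v = y t then 1 else d)" for v
  have "exp4_norm \<eta> N E y t q
      = (\<Sum>i<N. q i * indic (E t i) * w True + (q i - q i * indic (E t i)) * w False)"
    unfolding exp4_norm_def
    by (intro sum.cong refl) (simp add: w_def d_def exp4_lhat_def indic_def)
  also have "\<dots> = a * w True + (1 - a) * w False"
    using assms(1)
    by (simp add: a_def vote_share_def prob_vector_def sum.distrib sum_subtractf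
        flip: sum_distrib_right)
  finally show ?thesis
    by (simp add: w_def)
qed

lemma prob_vector_exp4_update:
  assumes "prob_vector N q"
  shows "prob_vector N (exp4_update \<eta> N E y t q yh)"
proof -
  define w where "w i = q i * exp (- \<eta> * exp4_lhat \<eta> N E y t q yh (E t i))" for i
  have "0 < (\<Sum>i<N. w i)"
    using assms prob_vector_nonempty[OF assms] unfolding w_def
    by (intro sum_pos) (auto simp: prob_vector_def)
  moreover have "exp4_update \<eta> N E y t q yh = (\<lambda>i. w i / (\<Sum>j<N. w j))"
    by (simp add: exp4_update_def w_def)
  ultimately show ?thesis
    using assms by (auto simp: prob_vector_def w_def simp flip: sum_divide_distrib)
qed

text \<open>By ln_exp4_update_True, p * ln (exp4_norm ...) / \<eta> is the expected growth of the potential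
  minus the mistake of the tracked expert.\<close>
lemma exp4_round_bound:
  fixes \<eta> :: real and E :: "nat \<Rightarrow> nat \<Rightarrow> bool" and t :: nat
  assumes "prob_vector N q" "0 < \<eta>" "\<eta> \<le> 1"
  defines "p \<equiv> exp4_p1 \<eta> N E t q"
  shows "p * indic (True \<noteq> y t) + (1 - p) * indic (False \<noteq> y t)
           + p * ln (exp4_norm \<eta> N E y t q) / \<eta> \<le> 2 * \<eta>"
proof -
  define a where "a = vote_share N E t q"
  have "0 \<le> a" "a \<le> 1"
    using vote_share_bounds[OF assms(1)] by (simp_all add: a_def)
  moreover have "p = (1 - \<eta>) * a + \<eta>"
    by (simp add: p_def a_def exp4_p1_eq_vote_share)
  ultimately show ?thesis
    using exploration_round_bound[OF assms(2,3)] exp4_norm_eq[OF assms(1)]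
    by (cases "y t") (simp_all add: a_def p_def)
qed

lemma ln_exp4_update_True:
  assumes "prob_vector N q" "i < N"
  shows "ln (exp4_update \<eta> N E y t q True i)
         = ln (q i) - \<eta> * indic (E t i \<noteq> y t) / exp4_p1 \<eta> N E t q - ln (exp4_norm \<eta> N E y t q)"
proof -
  have "0 < q i" "0 < exp4_norm \<eta> N E y t q"
    using assms exp4_norm_pos by (auto simp: prob_vector_def)
  then show ?thesis
    by (simp add: exp4_update_True ln_div ln_mult)
qed

lemma finite_set_pmf_exp4_run: "finite (set_pmf (exp4_run \<eta> N E y k t q))"
  by (induction k arbitrary: t q) auto

lemma expectation_exp4_run_Suc:
  assumes "0 \<le> exp4_p1 \<eta> N E t q" "exp4_p1 \<eta> N E t q \<le> 1"
  shows "measure_pmf.expectation (exp4_run \<eta> N E y (Suc k) t q) real =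
     exp4_p1 \<eta> N E t q * (indic (True \<noteq> y t)
       + measure_pmf.expectation (exp4_run \<eta> N E y k (Suc t) (exp4_update \<eta> N E y t q True)) real)
   + (1 - exp4_p1 \<eta> N E t q) * (indic (False \<noteq> y t)
       + measure_pmf.expectation (exp4_run \<eta> N E y k (Suc t) (exp4_update \<eta> N E y t q False)) real)"
proof -
  have shift: "measure_pmf.expectation M (\<lambda>m. c + real m) = c + measure_pmf.expectation M real"
    if "finite (set_pmf M)" for M :: "nat pmf" and c :: real
    using that by (subst Bochner_Integration.integral_add) (auto simp: integrable_measure_pmf_finite)
  show ?thesis
    by (simp only: exp4_run.simps, subst pmf_expectation_bind[where A = UNIV])
       (use assms in \<open>auto simp: UNIV_bool finite_set_pmf_exp4_run shift indic_def\<close>)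
qed

lemma expectation_exp4_run_le:
  assumes "0 < \<eta>" "\<eta> \<le> 1" "j < N" "prob_vector N q"
  shows "measure_pmf.expectation (exp4_run \<eta> N E y k t q) real
    \<le> (\<Sum>s\<in>{t..<t+k}. indic (E s j \<noteq> y s)) - ln (q j) / \<eta> + 2 * \<eta> * real k"
  using assms(4)
proof (induction k arbitrary: t q)
  case 0
  have "0 < q j" "q j \<le> 1"
    using 0 assms(3) prob_vector_le_one by (auto simp: prob_vector_def)
  then have "ln (q j) / \<eta> \<le> 0"
    using assms(1) by (simp add: divide_nonpos_pos)
  then show ?case
    by simp
next
  case (Suc k)
  define p where "p = exp4_p1 \<eta> N E t q"
  define qT where "qT = exp4_update \<eta> N E y t q True"
  define S where "S = (\<Sum>s\<in>{Suc t..<Suc t+k}. indic (E s j \<noteq> y s))"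
  define R where "R r = S - ln (r j) / \<eta> + 2 * \<eta> * real k" for r :: "nat \<Rightarrow> real"
  define EM where "EM r = measure_pmf.expectation (exp4_run \<eta> N E y k (Suc t) r) real" for r
  have p: "\<eta> \<le> p" "p \<le> 1"
    using exp4_p1_bounds[OF Suc.prems assms(2)] by (simp_all add: p_def)
  have lnT: "ln (qT j) = ln (q j) - \<eta> * indic (E t j \<noteq> y t) / p - ln (exp4_norm \<eta> N E y t q)"
    unfolding qT_def p_def by (rule ln_exp4_update_True[OF Suc.prems assms(3)])
  have "measure_pmf.expectation (exp4_run \<eta> N E y (Suc k) t q) real
      = p * (indic (True \<noteq> y t) + EM qT) + (1 - p) * (indic (False \<noteq> y t) + EM q)"
    using expectation_exp4_run_Suc[of \<eta> N E t q] p assms(1) exp4_update_False[OF Suc.prems]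
    by (simp add: p_def qT_def EM_def)
  also have "\<dots> \<le> p * (indic (True \<noteq> y t) + R qT) + (1 - p) * (indic (False \<noteq> y t) + R q)"
    using Suc.IH[of qT "Suc t"] Suc.IH[of q "Suc t"] prob_vector_exp4_update[OF Suc.prems] Suc.prems
      p assms(1)
    by (intro add_mono mult_left_mono) (auto simp: R_def S_def qT_def EM_def)
  also have "\<dots> = p * indic (True \<noteq> y t) + (1 - p) * indic (False \<noteq> y t)
      + p * ln (exp4_norm \<eta> N E y t q) / \<eta> + indic (E t j \<noteq> y t) + R q"
    unfolding R_def lnT using p assms(1) by (simp add: field_simps)
  also have "\<dots> \<le> 2 * \<eta> + indic (E t j \<noteq> y t) + R q"
    using exp4_round_bound[OF Suc.prems assms(1,2)] by (simp add: p_def)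
  also have "\<dots> = (\<Sum>s\<in>{t..<t+Suc k}. indic (E s j \<noteq> y s)) - ln (q j) / \<eta> + 2 * \<eta> * real (Suc k)"
    by (simp add: R_def S_def sum.atLeast_Suc_lessThan algebra_simps)
  finally show ?case .
qed

lemma expectation_exp4_mistakes_le:
  assumes "0 < \<eta>" "\<eta> \<le> 1" "j < N"
  shows "measure_pmf.expectation (exp4_mistakes \<eta> N T E y) real
    \<le> (\<Sum>t=1..T. indic (E t j \<noteq> y t)) + ln (real N) / \<eta> + 2 * \<eta> * real T"
proof -
  have "prob_vector N (\<lambda>i. 1 / real N)"
    using assms(3) by (simp add: prob_vector_def)
  from expectation_exp4_run_le[OF assms this, where k = T and t = 1]
  show ?thesis
    using assms(3) by (simp add: exp4_mistakes_def ln_div atLeastLessThanSuc_atLeastAtMost)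
qed

lemma tuned_learning_rate_bound:
  fixes T :: nat and L \<eta> :: real
  assumes "0 < \<eta>" and \<eta>: "\<eta> = sqrt (L / (2 * real T))"
  shows "L / \<eta> + 2 * \<eta> * real T \<le> 3 * sqrt (real T * L)"
proof -
  have "0 < L / (2 * real T)"
    using assms by simp
  then have "0 < real T" "0 < L"
    by (auto simp: zero_less_divide_iff)
  then have L: "L = 2 * real T * \<eta>\<^sup>2"
    using \<eta> by simp
  have "L / \<eta> + 2 * \<eta> * real T = 4 * real T * \<eta>"
    using assms(1) by (simp add: L power2_eq_square field_simps)
  also have "\<dots> \<le> sqrt (9 * (real T * L))"
  proof (rule real_le_rsqrt)
    have "(4 * real T * \<eta>)\<^sup>2 = 8 * (real T * L)"
      by (simp add: L power2_eq_square)
    then show "(4 * real T * \<eta>)\<^sup>2 \<le> 9 * (real T * L)"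
      using \<open>0 < real T\<close> \<open>0 < L\<close> by simp
  qed
  also have "\<dots> = 3 * sqrt (real T * L)"
    by (simp add: real_sqrt_mult)
  finally show ?thesis .
qed

theorem theorem3:
  fixes N T :: nat and \<eta> :: real
    and E :: "nat \<Rightarrow> nat \<Rightarrow> bool" and y :: "nat \<Rightarrow> bool"
  assumes "N \<ge> 1"
    and eta_def: "\<eta> = sqrt (ln (real N) / (2 * real T))"
    and "0 < \<eta>" and "\<eta> < 1/2"
  shows "measure_pmf.expectation (exp4_mistakes \<eta> N T E y) real
         \<le> (INF j\<in>{..<N}. (\<Sum>t=1..T. indic (E t j \<noteq> y t)))
            + 3 * sqrt (real T * ln (real N))"
proof -
  have "measure_pmf.expectation (exp4_mistakes \<eta> N T E y) real - 3 * sqrt (real T * ln (real N))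
      \<le> (\<Sum>t=1..T. indic (E t j \<noteq> y t))" if "j < N" for j
    using expectation_exp4_mistakes_le[of \<eta> j N T E y] tuned_learning_rate_bound[OF assms(3) eta_def]
      that assms(3,4) by linarith
  then have "measure_pmf.expectation (exp4_mistakes \<eta> N T E y) real - 3 * sqrt (real T * ln (real N))
      \<le> (INF j\<in>{..<N}. (\<Sum>t=1..T. indic (E t j \<noteq> y t)))"
    using assms(1) by (intro cINF_greatest) (auto simp: lessThan_empty_iff)
  then show ?thesis
    by simp
qed

end
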